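(* Let $\mathbf{v}$ be a random variable giving weak ignorability, i.e. for both $t\in\{0,1\}$, $\mathbf{y}(t)\perp\mathrm{t}\mid\mathbf{v}$ and $p(\mathrm{t}\mid\mathbf{v})>0$. If $\mathbb{P}_{\mathrm{t}}(\mathbf{v})$ is a Pt-score, then $\mathbf{y}(t)\perp\mathbf{v},\mathrm{t}\mid\mathbb{P}_t$ for both $t\in\{0,1\}$.
   Context: Potential outcomes framework: binary treatment $\mathrm{t}\in\{0,1\}$ and potential outcomes $\mathbf{y}(0),\mathbf{y}(1)$. A P0-score (resp. P1-score) of $\mathbf{v}$ is a function $\mathbb{P}(\mathbf{v})$ such that $\mathbf{y}(0)\perp\mathbf{v}\mid\mathbb{P}(\mathbf{v})$ (resp. $\mathbf{y}(1)\perp\mathbf{v}\mid\mathbb{P}(\mathbf{v})$). Given a P0-score $\mathbb{P}_0$ and a P1-score $\mathbb{P}_1$, the Pt-score is $\mathbb{P}_{\mathrm{t}}$, i.e. $\mathbb{P}_t$ when $\mathrm{t}=t$. *)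

theory Defs
  imports "HOL-Probability.Probability"
begin

definition gen_sigma :: "'a measure \<Rightarrow> ('a \<Rightarrow> 'c) \<Rightarrow> 'c measure \<Rightarrow> 'a measure" where
  "gen_sigma M Z MZ = vimage_algebra (space M) Z MZ"

definition cond_indep ::
  "'a measure \<Rightarrow> ('a \<Rightarrow> 'b) \<Rightarrow> 'b measure \<Rightarrow> ('a \<Rightarrow> 'd) \<Rightarrow> 'd measure
     \<Rightarrow> ('a \<Rightarrow> 'c) \<Rightarrow> 'c measure \<Rightarrow> bool" where
  "cond_indep M X MX W MW Z MZ \<longleftrightarrow>
     (\<forall>A\<in>sets MX. \<forall>B\<in>sets MW.
        AE \<omega> in M.
          real_cond_exp M (gen_sigma M Z MZ)
             (indicator (X -` A \<inter> W -` B \<inter> space M)) \<omega>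
          = real_cond_exp M (gen_sigma M Z MZ) (indicator (X -` A \<inter> space M)) \<omega>
            * real_cond_exp M (gen_sigma M Z MZ) (indicator (W -` B \<inter> space M)) \<omega>)"

end

theory Submission
  imports Defs
begin

text \<open>Let G be the sigma-algebra generated by V, H \<subseteq> G the one generated by the score P t \<circ> V,
  and a an event of Y t. The score property says exactly that E[1_a | G] = E[1_a | H].
  Every event of (V, T) is a disjoint union of events c \<inter> {T = b} with c \<in> G. Pulling 1_c out of
  E[- | G] and using ignorability gives
  E[1_(a \<inter> c \<inter> {T = b}) | G] = E[1_a | H] * E[1_(c \<inter> {T = b}) | G],
  and conditioning down to H by the tower property yields the required factorisation over H.\<close>

lemma sets_gen_sigma:
  assumes "X \<in> measurable M MX"
  shows "sets (gen_sigma M X MX) = {X -` A \<inter> space M | A. A \<in> sets MX}"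
  unfolding gen_sigma_def using assms by (intro sets_vimage_algebra2) (auto simp: measurable_def)

lemma subalgebra_gen_sigma:
  assumes "X \<in> measurable M MX"
  shows "subalgebra M (gen_sigma M X MX)"
  unfolding subalgebra_def gen_sigma_def
  using assms by (auto simp: sets_vimage_algebra2 measurable_def)

lemma subalgebra_gen_sigma_comp:
  assumes X: "X \<in> measurable M MX" and f: "f \<in> measurable MX MY"
  shows "subalgebra (gen_sigma M X MX) (gen_sigma M (\<lambda>\<omega>. f (X \<omega>)) MY)"
  unfolding subalgebra_def
proof
  have fX: "(\<lambda>\<omega>. f (X \<omega>)) \<in> measurable M MY"
    using X f by measurable
  show "space (gen_sigma M (\<lambda>\<omega>. f (X \<omega>)) MY) = space (gen_sigma M X MX)"
    by (simp add: gen_sigma_def)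
  have "(\<lambda>\<omega>. f (X \<omega>)) -` A \<inter> space M \<in> sets (gen_sigma M X MX)" if A: "A \<in> sets MY" for A
  proof -
    have "(\<lambda>\<omega>. f (X \<omega>)) -` A \<inter> space M = X -` (f -` A \<inter> space MX) \<inter> space M"
      using measurable_space[OF X] by auto
    then show ?thesis
      unfolding sets_gen_sigma[OF X] using measurable_sets[OF f A] by blast
  qed
  then show "sets (gen_sigma M (\<lambda>\<omega>. f (X \<omega>)) MY) \<subseteq> sets (gen_sigma M X MX)"
    unfolding sets_gen_sigma[OF fX] by blast
qed

lemma cond_indep_iff_gen_sigma:
  assumes "X \<in> measurable M MX" "W \<in> measurable M MW"
  shows "cond_indep M X MX W MW Z MZ \<longleftrightarrow>
    (\<forall>a\<in>sets (gen_sigma M X MX). \<forall>b\<in>sets (gen_sigma M W MW). AE \<omega> in M.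
       real_cond_exp M (gen_sigma M Z MZ) (indicator (a \<inter> b)) \<omega>
       = real_cond_exp M (gen_sigma M Z MZ) (indicator a) \<omega>
         * real_cond_exp M (gen_sigma M Z MZ) (indicator b) \<omega>)"
proof -
  have inter: "X -` A \<inter> W -` B \<inter> space M = (X -` A \<inter> space M) \<inter> (W -` B \<inter> space M)" for A B
    by auto
  have "(\<forall>a\<in>{X -` A \<inter> space M | A. A \<in> sets MX}. \<forall>b\<in>{W -` B \<inter> space M | B. B \<in> sets MW}. Q a b)
    \<longleftrightarrow> (\<forall>A\<in>sets MX. \<forall>B\<in>sets MW. Q (X -` A \<inter> space M) (W -` B \<inter> space M))" for Q
    by blast
  then show ?thesis
    unfolding cond_indep_def sets_gen_sigma[OF assms(1)] sets_gen_sigma[OF assms(2)] inter by simp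
qed

lemma (in finite_measure) integrable_indicator_real [simp]:
  "a \<in> sets M \<Longrightarrow> integrable M (indicator a :: _ \<Rightarrow> real)"
  by (simp add: less_top[symmetric])

locale nested_subalgebras = prob_space +
  fixes G H :: "'a measure"
  assumes subalgebra_G: "subalgebra M G" and subalgebra_H: "subalgebra G H"
begin

lemma subalgebra_M_H: "subalgebra M H"
  using subalgebra_G subalgebra_H by (auto simp: subalgebra_def)

sublocale G: finite_measure_subalgebra M G
  by unfold_locales (rule subalgebra_G)

sublocale H: finite_measure_subalgebra M H
  by unfold_locales (rule subalgebra_M_H)

lemma sets_G_imp_sets_M: "d \<in> sets G \<Longrightarrow> d \<in> sets M"
  using subalgebra_G by (auto simp: subalgebra_def)

lemma real_cond_exp_indicator_eq_if_cond_indep: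
  assumes a: "a \<in> sets M"
    and indep: "\<And>d. d \<in> sets G \<Longrightarrow> AE x in M.
      real_cond_exp M H (indicator (a \<inter> d)) x
      = real_cond_exp M H (indicator a) x * real_cond_exp M H (indicator d) x"
  shows "AE x in M. real_cond_exp M G (indicator a) x = real_cond_exp M H (indicator a) x"
proof (rule G.real_cond_exp_charact)
  fix d assume d: "d \<in> sets G"
  then have dM: "d \<in> sets M" by (rule sets_G_imp_sets_M)
  have "(\<integral>x\<in>d. indicator a x \<partial>M) = (\<integral>x. indicator (a \<inter> d) x \<partial>M)"
    unfolding set_lebesgue_integral_def
    by (intro Bochner_Integration.integral_cong) (auto split: split_indicator)
  also have "\<dots> = (\<integral>x. real_cond_exp M H (indicator (a \<inter> d)) x \<partial>M)"
    using a dM by (simp add: H.real_cond_exp_int(2))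
  also have "\<dots> = (\<integral>x. real_cond_exp M H (indicator a) x * real_cond_exp M H (indicator d) x \<partial>M)"
    by (rule integral_cong_AE) (use indep[OF d] in auto)
  also have "\<dots> = (\<integral>x. real_cond_exp M H (indicator a) x * indicator d x \<partial>M)"
  proof (rule H.real_cond_exp_intg(2))
    show "integrable M (\<lambda>x. real_cond_exp M H (indicator a) x * indicator d x)"
      using integrable_mult_indicator[OF dM H.real_cond_exp_int(1)[of "indicator a"]] a
      by (simp add: mult.commute)
  qed (use dM in auto)
  also have "\<dots> = (\<integral>x\<in>d. real_cond_exp M H (indicator a) x \<partial>M)"
    unfolding set_lebesgue_integral_def by (simp add: mult.commute)
  finally show "(\<integral>x\<in>d. indicator a x \<partial>M) = (\<integral>x\<in>d. real_cond_exp M H (indicator a) x \<partial>M)" .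
next
  show "real_cond_exp M H (indicator a) \<in> borel_measurable G"
    by (rule measurable_from_subalg[OF subalgebra_H]) simp
qed (use a in auto)

lemma real_cond_exp_tower_mult:
  assumes f: "integrable M f" and g: "integrable M g" and h: "h \<in> borel_measurable H"
    and G_eq: "AE x in M. real_cond_exp M G f x = h x * real_cond_exp M G g x"
  shows "AE x in M. real_cond_exp M H f x = h x * real_cond_exp M H g x"
proof -
  have hM: "h \<in> borel_measurable M"
    by (rule measurable_from_subalg[OF subalgebra_M_H h])
  have "integrable M (\<lambda>x. h x * real_cond_exp M G g x)"
    by (rule integrable_cong_AE_imp[OF G.real_cond_exp_int(1)[OF f] _ G_eq]) (use hM in simp)
  then have "AE x in M. real_cond_exp M H (\<lambda>x. h x * real_cond_exp M G g x) x
      = h x * real_cond_exp M H (real_cond_exp M G g) x"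
    using h by (intro H.real_cond_exp_mult) auto
  moreover have "AE x in M. real_cond_exp M H (real_cond_exp M G f) x
      = real_cond_exp M H (\<lambda>x. h x * real_cond_exp M G g x) x"
    using G_eq hM by (intro H.real_cond_exp_cong) auto
  moreover have "AE x in M. real_cond_exp M H (real_cond_exp M G f) x = real_cond_exp M H f x"
    using subalgebra_G subalgebra_H f by (rule H.real_cond_exp_nested_subalg)
  moreover have "AE x in M. real_cond_exp M H (real_cond_exp M G g) x = real_cond_exp M H g x"
    using subalgebra_G subalgebra_H g by (rule H.real_cond_exp_nested_subalg)
  ultimately show ?thesis by eventually_elim simp
qed

lemma real_cond_exp_indicator_inter_factor:
  assumes a: "a \<in> sets M"
    and a_G_H: "AE x in M. real_cond_exp M G (indicator a) x = real_cond_exp M H (indicator a) x"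
    and c: "c \<in> sets G" and e: "e \<in> sets M"
    and indep_e: "AE x in M. real_cond_exp M G (indicator (a \<inter> e)) x
      = real_cond_exp M G (indicator a) x * real_cond_exp M G (indicator e) x"
  shows "AE x in M. real_cond_exp M H (indicator (a \<inter> (c \<inter> e))) x
    = real_cond_exp M H (indicator a) x * real_cond_exp M H (indicator (c \<inter> e)) x"
proof -
  have cM: "c \<in> sets M" using c by (rule sets_G_imp_sets_M)
  have pull_out: "AE x in M. real_cond_exp M G (indicator (c \<inter> b)) x
      = indicator c x * real_cond_exp M G (indicator b) x" if b: "b \<in> sets M" for b
  proof -
    have "AE x in M. real_cond_exp M G (\<lambda>x. indicator c x * indicator b x) x
        = indicator c x * real_cond_exp M G (indicator b) x"
      using b c cM by (intro G.real_cond_exp_mult) (auto simp flip: indicator_inter_arith)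
    then show ?thesis by (simp add: indicator_inter_arith[abs_def])
  qed
  have swap: "a \<inter> (c \<inter> e) = c \<inter> (a \<inter> e)" by blast
  have "AE x in M. real_cond_exp M G (indicator (a \<inter> (c \<inter> e))) x
      = real_cond_exp M H (indicator a) x * real_cond_exp M G (indicator (c \<inter> e)) x"
    unfolding swap using pull_out[OF sets.Int[OF a e]] pull_out[OF e] indep_e a_G_H
    by eventually_elim simp
  then show ?thesis
    using a e cM by (intro real_cond_exp_tower_mult) simp_all
qed

lemma real_cond_exp_indicator_Union_factor:
  fixes c e :: "'i::finite \<Rightarrow> 'a set"
  assumes a: "a \<in> sets M"
    and a_G_H: "AE x in M. real_cond_exp M G (indicator a) x = real_cond_exp M H (indicator a) x"
    and c: "\<And>i. c i \<in> sets G" and e: "\<And>i. e i \<in> sets M" and disj: "disjoint_family e"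
    and indep_e: "\<And>i. AE x in M. real_cond_exp M G (indicator (a \<inter> e i)) x
      = real_cond_exp M G (indicator a) x * real_cond_exp M G (indicator (e i)) x"
  shows "AE x in M. real_cond_exp M H (indicator (a \<inter> (\<Union>i. c i \<inter> e i))) x
    = real_cond_exp M H (indicator a) x * real_cond_exp M H (indicator (\<Union>i. c i \<inter> e i)) x"
proof -
  have ce: "c i \<inter> e i \<in> sets M" for i
    using sets_G_imp_sets_M[OF c] e by (rule sets.Int)
  have disj_ce: "disjoint_family (\<lambda>i. c i \<inter> e i)"
    and disj_a_ce: "disjoint_family (\<lambda>i. a \<inter> (c i \<inter> e i))"
    using disj by (auto simp: disjoint_family_on_def)
  have Int_Union: "a \<inter> (\<Union>i. c i \<inter> e i) = (\<Union>i. a \<inter> (c i \<inter> e i))" by blast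
  have sum_a: "indicator (a \<inter> (\<Union>i. c i \<inter> e i)) = (\<lambda>x. \<Sum>i\<in>UNIV. indicator (a \<inter> (c i \<inter> e i)) x :: real)"
    unfolding Int_Union by (intro ext indicator_UN_disjoint finite disj_a_ce)
  have sum: "indicator (\<Union>i. c i \<inter> e i) = (\<lambda>x. \<Sum>i\<in>UNIV. indicator (c i \<inter> e i) x :: real)"
    by (intro ext indicator_UN_disjoint finite disj_ce)
  have "AE x in M. real_cond_exp M H (indicator (a \<inter> (\<Union>i. c i \<inter> e i))) x
      = (\<Sum>i\<in>UNIV. real_cond_exp M H (indicator (a \<inter> (c i \<inter> e i))) x)"
    unfolding sum_a using a ce by (intro H.real_cond_exp_sum) simp
  moreover have "AE x in M. real_cond_exp M H (indicator (\<Union>i. c i \<inter> e i)) x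
      = (\<Sum>i\<in>UNIV. real_cond_exp M H (indicator (c i \<inter> e i)) x)"
    unfolding sum using ce by (intro H.real_cond_exp_sum) simp
  moreover have "AE x in M. \<forall>i\<in>UNIV. real_cond_exp M H (indicator (a \<inter> (c i \<inter> e i))) x
      = real_cond_exp M H (indicator a) x * real_cond_exp M H (indicator (c i \<inter> e i)) x"
    by (intro AE_finite_allI[OF finite] real_cond_exp_indicator_inter_factor a a_G_H c e indep_e)
  ultimately show ?thesis
    by eventually_elim (simp add: sum_distrib_left)
qed

end

lemma gen_sigma_pair_count_space_Union:
  fixes T :: "'a \<Rightarrow> 'b"
  assumes V: "V \<in> measurable M MV" and T: "T \<in> measurable M (count_space UNIV)"
    and w: "w \<in> sets (gen_sigma M (\<lambda>\<omega>. (V \<omega>, T \<omega>)) (MV \<Otimes>\<^sub>M count_space UNIV))"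
  obtains c where "\<And>b. c b \<in> sets (gen_sigma M V MV)" and "w = (\<Union>b. c b \<inter> (T -` {b} \<inter> space M))"
proof -
  have VT: "(\<lambda>\<omega>. (V \<omega>, T \<omega>)) \<in> measurable M (MV \<Otimes>\<^sub>M count_space UNIV)"
    using V T by measurable
  obtain B where B: "B \<in> sets (MV \<Otimes>\<^sub>M count_space UNIV)"
    and w_eq: "w = (\<lambda>\<omega>. (V \<omega>, T \<omega>)) -` B \<inter> space M"
    using w unfolding sets_gen_sigma[OF VT] by blast
  define c where "c b = V -` ((\<lambda>v. (v, b)) -` B \<inter> space MV) \<inter> space M" for b
  show thesis
  proof (rule that)
    fix b :: 'b
    have "(\<lambda>v. (v, b)) \<in> measurable MV (MV \<Otimes>\<^sub>M count_space UNIV)" by simp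
    then show "c b \<in> sets (gen_sigma M V MV)"
      unfolding sets_gen_sigma[OF V] c_def using measurable_sets B by blast
  next
    show "w = (\<Union>b. c b \<inter> (T -` {b} \<inter> space M))"
      using measurable_space[OF V] by (auto simp: w_eq c_def)
  qed
qed

lemma cond_indep_pair_if_score:
  fixes T :: "'a \<Rightarrow> 'b::finite" and p :: "'v \<Rightarrow> 's" and MS :: "'s measure"
  assumes prob: "prob_space M"
    and X: "X \<in> measurable M MX" and T: "T \<in> measurable M (count_space UNIV)"
    and V: "V \<in> measurable M MV" and p: "p \<in> measurable MV MS"
    and ignorability: "cond_indep M X MX T (count_space UNIV) V MV"
    and score: "cond_indep M X MX V MV (\<lambda>\<omega>. p (V \<omega>)) MS"
  shows "cond_indep M X MX (\<lambda>\<omega>. (V \<omega>, T \<omega>)) (MV \<Otimes>\<^sub>M count_space UNIV) (\<lambda>\<omega>. p (V \<omega>)) MS"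
proof -
  interpret nested_subalgebras M "gen_sigma M V MV" "gen_sigma M (\<lambda>\<omega>. p (V \<omega>)) MS"
    using prob V p
    by (intro nested_subalgebras.intro nested_subalgebras_axioms.intro
        subalgebra_gen_sigma subalgebra_gen_sigma_comp)
  have VT: "(\<lambda>\<omega>. (V \<omega>, T \<omega>)) \<in> measurable M (MV \<Otimes>\<^sub>M count_space UNIV)"
    using V T by measurable
  show ?thesis
    unfolding cond_indep_iff_gen_sigma[OF X VT]
  proof (intro ballI)
    fix a w
    assume a: "a \<in> sets (gen_sigma M X MX)"
      and w: "w \<in> sets (gen_sigma M (\<lambda>\<omega>. (V \<omega>, T \<omega>)) (MV \<Otimes>\<^sub>M count_space UNIV))"
    have aM: "a \<in> sets M"
      using subalgebra_gen_sigma[OF X] a by (auto simp: subalgebra_def)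
    define e where "e b = T -` {b} \<inter> space M" for b
    obtain c where c: "\<And>b. c b \<in> sets (gen_sigma M V MV)" and w_Union: "w = (\<Union>b. c b \<inter> e b)"
      using gen_sigma_pair_count_space_Union[OF V T w] unfolding e_def[symmetric] by blast
    have e: "e b \<in> sets (gen_sigma M T (count_space UNIV))" for b
      unfolding sets_gen_sigma[OF T] e_def by auto
    have eM: "e b \<in> sets M" for b
      using subalgebra_gen_sigma[OF T] e by (auto simp: subalgebra_def)
    have disj: "disjoint_family e"
      by (auto simp: disjoint_family_on_def e_def)
    have "AE x in M. real_cond_exp M (gen_sigma M V MV) (indicator a) x
        = real_cond_exp M (gen_sigma M (\<lambda>\<omega>. p (V \<omega>)) MS) (indicator a) x"
      using score a unfolding cond_indep_iff_gen_sigma[OF X V]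
      by (intro real_cond_exp_indicator_eq_if_cond_indep aM) auto
    then show "AE x in M. real_cond_exp M (gen_sigma M (\<lambda>\<omega>. p (V \<omega>)) MS) (indicator (a \<inter> w)) x
        = real_cond_exp M (gen_sigma M (\<lambda>\<omega>. p (V \<omega>)) MS) (indicator a) x
          * real_cond_exp M (gen_sigma M (\<lambda>\<omega>. p (V \<omega>)) MS) (indicator w) x"
      unfolding w_Union using ignorability a e unfolding cond_indep_iff_gen_sigma[OF X T]
      by (intro real_cond_exp_indicator_Union_factor[OF aM _ c eM disj]) auto
  qed
qed

theorem proposition1:
  fixes M :: "'a measure"
    and Y :: "bool \<Rightarrow> 'a \<Rightarrow> 'y" and MY :: "'y measure"
    and T :: "'a \<Rightarrow> bool"
    and V :: "'a \<Rightarrow> 'v" and MV :: "'v measure"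
    and P :: "bool \<Rightarrow> 'v \<Rightarrow> 's" and MS :: "'s measure"
  assumes prob: "prob_space M"
    and Y_meas: "\<And>t. Y t \<in> measurable M MY"
    and T_meas: "T \<in> measurable M (count_space UNIV)"
    and V_meas: "V \<in> measurable M MV"
    and P_meas: "\<And>t. P t \<in> measurable MV MS"
    and ignorability: "\<And>t. cond_indep M (Y t) MY T (count_space UNIV) V MV"
    and overlap: "\<And>t. AE \<omega> in M.
                    real_cond_exp M (gen_sigma M V MV) (indicator (T -` {t} \<inter> space M)) \<omega> > 0"
    and score: "\<And>t. cond_indep M (Y t) MY V MV (\<lambda>\<omega>. P t (V \<omega>)) MS"
  shows "\<forall>t. cond_indep M (Y t) MY (\<lambda>\<omega>. (V \<omega>, T \<omega>)) (MV \<Otimes>\<^sub>M count_space UNIV)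
                (\<lambda>\<omega>. P t (V \<omega>)) MS"
  using cond_indep_pair_if_score[OF prob Y_meas T_meas V_meas P_meas ignorability score] by blast

end
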